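(* Let $\mathbf{S}$ be a real symmetric positive semidefinite $p\times p$ matrix and $\lambda_a\in(0,\infty)$. The function $\mathbf{\Omega}\mapsto \ln|\mathbf{\Omega}| - \mathrm{tr}(\mathbf{S}\mathbf{\Omega}) - \frac{\lambda_a}{2}\mathrm{tr}(\mathbf{\Omega}^{\mathrm{T}}\mathbf{\Omega})$ over real symmetric positive definite $p\times p$ matrices is maximized by $$\hat{\mathbf{\Omega}}^{\mathrm{II}a}(\lambda_a) = \Big\{\Big[\lambda_a\mathbf{I}_p + \tfrac14\mathbf{S}^2\Big]^{1/2} + \tfrac12\mathbf{S}\Big\}^{-1},$$ the solution of $\mathbf{\Omega}^{-1}-\mathbf{S}-\lambda_a\mathbf{\Omega}=\mathbf{0}$. Moreover: (i) $\hat{\mathbf{\Omega}}^{\mathrm{II}a}(\lambda_a)$ is positive definite for all $\lambda_a\in(0,\infty)$; (ii) if $\mathbf{S}$ is positive definite, $\lim_{\lambda_a\to0^+}\hat{\mathbf{\Omega}}^{\mathrm{II}a}(\lambda_a)=\mathbf{S}^{-1}$; (iii) $\lim_{\lambda_a\to\infty}\hat{\mathbf{\Omega}}^{\mathrm{II}a}(\lambda_a)=\mathbf{0}$.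
   Context: $|\cdot|$ is the determinant, $\mathbf{I}_p$ the identity; for a real symmetric positive definite $\mathbf{H}$, $\mathbf{H}^{1/2}$ is its unique symmetric positive definite square root. *)

theory Defs
  imports "HOL-Analysis.Analysis"
begin

definition sym_mat :: "real^'n^'n \<Rightarrow> bool" where
  "sym_mat A \<longleftrightarrow> transpose A = A"

definition psd_mat :: "real^'n^'n \<Rightarrow> bool" where
  "psd_mat A \<longleftrightarrow> sym_mat A \<and> (\<forall>x. 0 \<le> x \<bullet> (A *v x))"

definition pd_mat :: "real^'n^'n \<Rightarrow> bool" where
  "pd_mat A \<longleftrightarrow> sym_mat A \<and> (\<forall>x. x \<noteq> 0 \<longrightarrow> 0 < x \<bullet> (A *v x))"

definition mat_sqrt :: "real^'n^'n \<Rightarrow> real^'n^'n" where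
  "mat_sqrt H = (THE R. pd_mat R \<and> R ** R = H)"

definition objective :: "real^'n^'n \<Rightarrow> real \<Rightarrow> real^'n^'n \<Rightarrow> real" where
  "objective S la \<Omega> = ln (det \<Omega>) - trace (S ** \<Omega>) - la / 2 * trace (transpose \<Omega> ** \<Omega>)"

definition Omega_hat :: "real^'n^'n \<Rightarrow> real \<Rightarrow> real^'n^'n" where
  "Omega_hat S la = matrix_inv (mat_sqrt (la *\<^sub>R mat 1 + (1/4) *\<^sub>R (S ** S)) + (1/2) *\<^sub>R S)"

end

theory Submission
  imports Defs "HOL-Real_Asymp.Real_Asymp"
begin

(* Every real symmetric matrix is orthogonally diagonalisable (spectral theorem,
   proved here by maximising the Rayleigh quotient on invariant subspaces).  Writing
   S = U diag(s) U^T with s >= 0, all operations in the definition of Omega_hat -- sums,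
   products, scalings, the positive definite square root and the inverse -- act eigenvalue-wise,
   so Omega_hat S la = U diag(w la (s i)) U^T for the scalar function
   w la x = 1 / (sqrt (la + x^2/4) + x/2), the unique positive root of 1/w - x - la w = 0.
   Positive definiteness, the stationarity equation, uniqueness of its pd solution and both
   limits therefore reduce to elementary facts about w.  Optimality is a concavity argument:
   if Oh is pd with Oh^-1 = S + la Oh, K = Oh^(-1/2) and X = K Omega K, then
     objective Omega - objective Oh = (ln det X - tr X + p) - la/2 tr ((Omega - Oh)^2) <= 0,
   using ln t <= t - 1 on the eigenvalues of X. *)

lemma matrix_add_rdistrib: "((A::real^'n^'m) + B) ** C = A ** C + B ** C"
  by (simp add: matrix_matrix_mult_def vec_eq_iff sum.distrib distrib_right)

lemma matrix_diff_rdistrib: "((A::real^'n^'m) - B) ** C = A ** C - B ** C"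
  by (simp add: matrix_matrix_mult_def vec_eq_iff sum_subtractf left_diff_distrib)

lemma matrix_diff_ldistrib: "(A::real^'n^'m) ** (B - C) = A ** B - A ** C"
  by (simp add: matrix_matrix_mult_def vec_eq_iff sum_subtractf right_diff_distrib)

lemma matrix_scaleR_right: "(A::real^'n^'m) ** (c *\<^sub>R B) = c *\<^sub>R (A ** B)"
  by (simp add: matrix_scalar_ac scalar_matrix_assoc)

lemma matrix_scaleR_left: "(c *\<^sub>R (A::real^'n^'m)) ** B = c *\<^sub>R (A ** B)"
  by (simp add: scalar_matrix_assoc)

lemma trace_scaleR: "trace (c *\<^sub>R (A::real^'n^'n)) = c * trace A"
  by (simp add: trace_def sum_distrib_left)

lemma transpose_diff: "transpose ((A::real^'n^'n) - B) = transpose A - transpose B"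
  by (simp add: transpose_def vec_eq_iff)

lemma matrix_inv_eq:
  assumes "(A::real^'n^'n) ** B = mat 1"
  shows "matrix_inv A = B"
proof -
  have BA: "B ** A = mat 1" using assms matrix_left_right_inverse by blast
  have AI: "A ** matrix_inv A = mat 1 \<and> matrix_inv A ** A = mat 1"
    unfolding matrix_inv_def by (rule someI[of _ B]) (use assms BA in blast)
  have "matrix_inv A = (B ** A) ** matrix_inv A" using BA by simp
  also have "\<dots> = B ** (A ** matrix_inv A)" by (simp add: matrix_mul_assoc)
  also have "\<dots> = B" using AI by simp
  finally show ?thesis .
qed

lemma sym_inner:
  assumes "sym_mat (A::real^'n^'n)"
  shows "x \<bullet> (A *v y) = (A *v x) \<bullet> y"
proof -
  have "x \<bullet> (A *v y) = (x v* A) \<bullet> y" by (simp add: dot_lmul_matrix)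
  also have "x v* A = transpose A *v x" by simp
  also have "\<dots> = A *v x" using assms by (simp add: sym_mat_def del: transpose_matrix_vector)
  finally show ?thesis .
qed

lemma pd_quad_nonneg: "pd_mat A \<Longrightarrow> 0 \<le> x \<bullet> (A *v x)"
  by (cases "x = 0") (auto simp: pd_mat_def less_imp_le)

(* The trace of the Gram matrix D^T D is the sum of squares of the entries. *)
lemma trace_gram_nonneg: "trace (transpose (D::real^'n^'n) ** D) \<ge> 0"
  by (simp add: trace_def matrix_matrix_mult_def transpose_def sum_nonneg)

(* The matrix U diag(g) U^T.  For an orthogonal U, these matrices form a commutative algebra
   isomorphic to the functions 'n => real; all matrix computations below take place in it. *)
definition diag_mat :: "('n \<Rightarrow> real) \<Rightarrow> real^'n^'n" where
  "diag_mat g = (\<chi> i j. if i = j then g i else 0)"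

definition orth_diag :: "real^'n^'n \<Rightarrow> ('n \<Rightarrow> real) \<Rightarrow> real^'n^'n" where
  "orth_diag U g = U ** diag_mat g ** transpose U"

lemma diag_mat_mult: "diag_mat g ** diag_mat h = diag_mat (\<lambda>i::'n::finite. g i * h i)"
proof -
  have "(\<Sum>k\<in>UNIV. (if i = k then g i else 0) * (if k = j then h k else 0))
        = (if i = j then g i * h i else 0)" for i j :: 'n
  proof -
    have "(\<Sum>k\<in>UNIV. (if i = k then g i else 0) * (if k = j then h k else 0))
          = (\<Sum>k\<in>UNIV. if k = i then g i * (if i = j then h i else 0) else 0)"
      by (rule sum.cong) auto
    then show ?thesis by simp
  qed
  then show ?thesis by (simp add: diag_mat_def matrix_matrix_mult_def vec_eq_iff)
qed

lemma diag_mat_add: "diag_mat g + diag_mat h = diag_mat (\<lambda>i. g i + h i)"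
  by (simp add: diag_mat_def vec_eq_iff)

lemma diag_mat_diff: "diag_mat g - diag_mat h = diag_mat (\<lambda>i. g i - h i)"
  by (simp add: diag_mat_def vec_eq_iff)

lemma diag_mat_scaleR: "c *\<^sub>R diag_mat g = diag_mat (\<lambda>i. c * g i)"
  by (simp add: diag_mat_def vec_eq_iff)

lemma diag_mat_const: "diag_mat (\<lambda>i. c) = c *\<^sub>R mat 1"
  by (simp add: diag_mat_def vec_eq_iff mat_def)

lemma diag_mat_transpose: "transpose (diag_mat g) = diag_mat g"
  by (simp add: diag_mat_def vec_eq_iff transpose_def)

context
  fixes U :: "real^'n^'n"
  assumes U: "orthogonal_matrix U"
begin

lemma orth_UtU: "transpose U ** U = mat 1" and orth_UUt: "U ** transpose U = mat 1"
  using U by (auto simp: orthogonal_matrix_def)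

lemma orth_diag_mult: "orth_diag U g ** orth_diag U h = orth_diag U (\<lambda>i. g i * h i)"
proof -
  have "orth_diag U g ** orth_diag U h
        = U ** diag_mat g ** (transpose U ** U) ** diag_mat h ** transpose U"
    by (simp add: orth_diag_def matrix_mul_assoc)
  then show ?thesis
    by (simp add: orth_UtU orth_diag_def diag_mat_mult matrix_mul_assoc[symmetric])
qed

lemma orth_diag_add: "orth_diag U g + orth_diag U h = orth_diag U (\<lambda>i. g i + h i)"
  by (simp add: orth_diag_def matrix_add_ldistrib matrix_add_rdistrib diag_mat_add[symmetric])

lemma orth_diag_diff: "orth_diag U g - orth_diag U h = orth_diag U (\<lambda>i. g i - h i)"
  by (simp add: orth_diag_def matrix_diff_ldistrib matrix_diff_rdistrib diag_mat_diff[symmetric])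

lemma orth_diag_scaleR: "c *\<^sub>R orth_diag U g = orth_diag U (\<lambda>i. c * g i)"
  by (simp add: orth_diag_def matrix_scaleR_left matrix_scaleR_right diag_mat_scaleR[symmetric])

lemma orth_diag_const: "orth_diag U (\<lambda>i. c) = c *\<^sub>R mat 1"
  by (simp add: orth_diag_def diag_mat_const matrix_scaleR_left matrix_scaleR_right orth_UUt)

lemma orth_diag_sym: "transpose (orth_diag U g) = orth_diag U g"
  by (simp add: orth_diag_def matrix_transpose_mul diag_mat_transpose matrix_mul_assoc)

lemma orth_diag_inv:
  assumes "\<And>i. g i \<noteq> 0"
  shows "matrix_inv (orth_diag U g) = orth_diag U (\<lambda>i. 1 / g i)"
  by (rule matrix_inv_eq) (simp add: orth_diag_mult assms orth_diag_const)

lemma orth_diag_det: "det (orth_diag U g) = (\<Prod>i\<in>UNIV. g i)"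
proof -
  have "det U * det U = 1"
    using det_mul[of U "transpose U"] orth_UUt by (simp add: det_transpose)
  moreover have "det (diag_mat g) = (\<Prod>i\<in>UNIV. g i)"
    by (subst det_diagonal) (auto simp: diag_mat_def)
  ultimately show ?thesis by (simp add: orth_diag_def det_mul det_transpose)
qed

lemma orth_diag_trace: "trace (orth_diag U g) = sum g UNIV"
proof -
  have "trace (orth_diag U g) = trace ((diag_mat g ** transpose U) ** U)"
    unfolding orth_diag_def by (metis matrix_mul_assoc trace_mul_sym)
  also have "\<dots> = trace (diag_mat g)" by (simp add: matrix_mul_assoc[symmetric] orth_UtU)
  finally show ?thesis by (simp add: trace_def diag_mat_def)
qed

(* Entries depend continuously on the eigenvalues, so limits can be taken eigenvalue-wise. *)
lemma orth_diag_tendsto: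
  assumes "\<And>i. ((\<lambda>x. g x i) \<longlongrightarrow> l i) F"
  shows "((\<lambda>x. orth_diag U (g x)) \<longlongrightarrow> orth_diag U l) F"
proof -
  have entries: "orth_diag U h = (\<chi> i j. \<Sum>k\<in>UNIV. U$i$k * h k * U$j$k)" for h
    by (simp add: orth_diag_def diag_mat_def matrix_matrix_mult_def vec_eq_iff transpose_def
        if_distrib if_distribR sum.delta cong: if_cong)
  show ?thesis
    unfolding entries by (intro tendsto_vec_lambda tendsto_sum tendsto_mult tendsto_const assms)
qed

lemma orth_diag_quad:
  "x \<bullet> (orth_diag U g *v x) = (\<Sum>k\<in>UNIV. g k * ((transpose U *v x)$k)^2)"
proof -
  have "orth_diag U g *v x = U *v (diag_mat g *v (transpose U *v x))"
    by (simp add: orth_diag_def matrix_vector_mul_assoc matrix_mul_assoc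
        del: transpose_matrix_vector)
  then have "x \<bullet> (orth_diag U g *v x) = (transpose U *v x) \<bullet> (diag_mat g *v (transpose U *v x))"
    by (metis dot_lmul_matrix transpose_matrix_vector)
  also have "\<dots> = (\<Sum>k\<in>UNIV. g k * ((transpose U *v x)$k)^2)"
    by (simp add: inner_vec_def diag_mat_def matrix_vector_mult_def if_distrib if_distribR
        sum.delta power2_eq_square mult_ac cong: if_cong)
  finally show ?thesis .
qed

lemma orth_diag_pd:
  assumes "\<And>i. g i > 0"
  shows "pd_mat (orth_diag U g)"
  unfolding pd_mat_def sym_mat_def
proof (intro conjI allI impI orth_diag_sym)
  fix x :: "real^'n" assume "x \<noteq> 0"
  define y where "y = transpose U *v x"
  have "U *v y = x"
    by (simp add: y_def matrix_vector_mul_assoc orth_UUt del: transpose_matrix_vector)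
  then have "y \<noteq> 0" using \<open>x \<noteq> 0\<close> by auto
  then obtain k where k: "y $ k \<noteq> 0" by (auto simp: vec_eq_iff)
  have "0 < g k * (y$k)^2" using assms k by simp
  also have "\<dots> \<le> (\<Sum>k\<in>UNIV. g k * (y$k)^2)"
    by (rule member_le_sum) (simp_all add: assms less_imp_le)
  finally show "0 < x \<bullet> (orth_diag U g *v x)" by (simp add: orth_diag_quad y_def)
qed

lemma orth_diag_eigen: "(U *v axis i 1) \<bullet> (orth_diag U g *v (U *v axis i 1)) = g i"
  and orth_diag_eigen_nz: "U *v axis i 1 \<noteq> 0"
proof -
  have t: "transpose U *v (U *v axis i 1) = axis i 1"
    by (simp add: matrix_vector_mul_assoc orth_UtU del: transpose_matrix_vector)
  show "(U *v axis i 1) \<bullet> (orth_diag U g *v (U *v axis i 1)) = g i"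
    by (simp add: orth_diag_quad t del: transpose_matrix_vector)
      (simp add: axis_def if_distrib if_distribR sum.delta cong: if_cong)
  show "U *v axis i 1 \<noteq> 0"
  proof
    assume "U *v axis i 1 = 0"
    then have "axis i 1 = (0::real^'n)" using t by (simp del: transpose_matrix_vector)
    then show False by (simp add: axis_eq_0_iff)
  qed
qed

lemma orth_diag_psd_eigen: "psd_mat (orth_diag U g) \<Longrightarrow> g i \<ge> 0"
  using orth_diag_eigen[of i g] unfolding psd_mat_def by metis

lemma orth_diag_pd_eigen: "pd_mat (orth_diag U g) \<Longrightarrow> g i > 0"
  using orth_diag_eigen[of i g] orth_diag_eigen_nz[of i] unfolding pd_mat_def by metis

end

(* If 2 t a <= t^2 c for every real t, then a = 0 (take t small with the sign of a). *)
lemma linear_le_quadratic_imp_zero: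
  fixes a c :: real
  assumes "\<And>t. 2 * t * a \<le> t^2 * c"
  shows "a = 0"
proof (rule ccontr)
  assume "a \<noteq> 0"
  define e where "e = \<bar>c\<bar> + 1"
  have e: "e > 0" "c \<le> e - 1" by (auto simp: e_def)
  have "2 * (a / e) * a \<le> (a/e)^2 * c" by (rule assms)
  then have "2 * a * a * e \<le> a * a * c"
    using e by (simp add: field_simps power2_eq_square)
  moreover have "a * a * c \<le> a * a * (e - 1)" using e by (intro mult_left_mono) auto
  ultimately have "a * a * (e + 1) \<le> 0" by (simp add: algebra_simps)
  moreover have "a * a > 0" using \<open>a \<noteq> 0\<close> by (auto simp add: zero_less_mult_iff linorder_neq_iff)
  then have "a * a * (e + 1) > 0" using e by simp
  ultimately show False by simp
qed

(* A symmetric matrix has a unit eigenvector in every nonzero invariant subspace: a maximiser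
   of the quadratic form on the unit sphere of the subspace (first-order optimality). *)
lemma sym_eigenvector_in_invariant_subspace:
  fixes A :: "real^'n^'n"
  assumes A: "sym_mat A" and V: "subspace V" and inv: "\<And>x. x \<in> V \<Longrightarrow> A *v x \<in> V"
    and nz: "x0 \<in> V" "x0 \<noteq> 0"
  shows "\<exists>u\<in>V. norm u = 1 \<and> A *v u = (u \<bullet> (A *v u)) *\<^sub>R u"
proof -
  define K where "K = sphere (0::real^'n) 1 \<inter> V"
  have "compact K" unfolding K_def by (intro compact_Int_closed closed_subspace V compact_sphere)
  moreover have "(1 / norm x0) *\<^sub>R x0 \<in> K" using nz V by (auto simp: K_def subspace_scale)
  moreover have "continuous_on K (\<lambda>x. x \<bullet> (A *v x))"
    by (intro continuous_intros matrix_vector_mult_linear_continuous_on)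
  ultimately obtain u where uK: "u \<in> K" and umax: "\<And>y. y \<in> K \<Longrightarrow> y \<bullet> (A *v y) \<le> u \<bullet> (A *v u)"
    using continuous_attains_sup[of K "\<lambda>x. x \<bullet> (A *v x)"] by blast
  define m where "m = u \<bullet> (A *v u)"
  have uV: "u \<in> V" and un: "norm u = 1" using uK by (auto simp: K_def)
  then have uu: "u \<bullet> u = 1" by (simp add: norm_eq_1)
  have perp: "v \<bullet> (A *v u) = 0" if vV: "v \<in> V" and uv: "u \<bullet> v = 0" for v
  proof (rule linear_le_quadratic_imp_zero[where c = "m * (v \<bullet> v) - v \<bullet> (A *v v)"])
    fix t :: real
    define w where "w = u + t *\<^sub>R v"
    have wV: "w \<in> V" using uV vV V by (simp add: w_def subspace_add subspace_scale)
    have ww: "w \<bullet> w = 1 + t^2 * (v \<bullet> v)"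
      using uu uv by (simp add: w_def inner_add_left inner_add_right inner_commute power2_eq_square)
    moreover have "t^2 * (v \<bullet> v) \<ge> 0" by simp
    ultimately have "w \<bullet> w > 0" by linarith
    then have nw: "norm w > 0" by auto
    have "(1 / norm w) *\<^sub>R w \<in> K" using wV V nw by (auto simp: K_def subspace_scale)
    then have "((1 / norm w) *\<^sub>R w) \<bullet> (A *v ((1 / norm w) *\<^sub>R w)) \<le> m"
      unfolding m_def by (rule umax)
    then have "(1 / norm w)^2 * (w \<bullet> (A *v w)) \<le> m"
      by (simp add: matrix_vector_mult_scaleR power2_eq_square)
    moreover have "(norm w)^2 = w \<bullet> w" by (simp add: power2_norm_eq_inner)
    ultimately have "w \<bullet> (A *v w) \<le> m * (w \<bullet> w)"
      using nw by (simp add: field_simps power2_eq_square)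
    moreover have "u \<bullet> (A *v v) = v \<bullet> (A *v u)"
      using sym_inner[OF A, of u v] by (simp add: inner_commute)
    then have "w \<bullet> (A *v w) = m + 2 * t * (v \<bullet> (A *v u)) + t^2 * (v \<bullet> (A *v v))"
      by (simp add: w_def m_def inner_add_left inner_add_right matrix_vector_right_distrib
          matrix_vector_mult_scaleR power2_eq_square algebra_simps)
    ultimately show "2 * t * (v \<bullet> (A *v u)) \<le> t^2 * (m * (v \<bullet> v) - v \<bullet> (A *v v))"
      using ww by (simp add: algebra_simps)
  qed
  define r where "r = A *v u - m *\<^sub>R u"
  have "r \<in> V" using inv[OF uV] uV V by (simp add: r_def subspace_diff subspace_scale)
  moreover have "u \<bullet> r = 0" using uu by (simp add: r_def m_def inner_diff_right)
  ultimately have "r \<bullet> (A *v u) = 0" using perp by blast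
  moreover have "r \<bullet> u = 0" using \<open>u \<bullet> r = 0\<close> by (simp add: inner_commute)
  ultimately have "r \<bullet> r = 0" by (simp add: r_def inner_diff_right)
  then show ?thesis using uV un by (auto simp: r_def m_def)
qed

definition eigen_system :: "real^'n^'n \<Rightarrow> (real^'n) set \<Rightarrow> bool" where
  "eigen_system A B \<longleftrightarrow> finite B \<and> pairwise orthogonal B \<and>
     (\<forall>b\<in>B. norm b = 1 \<and> A *v b = (b \<bullet> (A *v b)) *\<^sub>R b)"

(* A non-maximal orthonormal eigen-system extends: the orthogonal complement of B is a
   nonzero A-invariant subspace, hence contains a unit eigenvector. *)
lemma eigen_system_extend:
  fixes A :: "real^'n^'n"
  assumes A: "sym_mat A" and B: "eigen_system A B" and cB: "card B < CARD('n)"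
  shows "\<exists>B'. eigen_system A B' \<and> card B' = Suc (card B)"
proof -
  have fB: "finite B" and poB: "pairwise orthogonal B"
    and nB: "\<And>b. b \<in> B \<Longrightarrow> norm b = 1"
    and eB: "\<And>b. b \<in> B \<Longrightarrow> A *v b = (b \<bullet> (A *v b)) *\<^sub>R b"
    using B by (auto simp: eigen_system_def)
  define V where "V = {y. \<forall>x\<in>B. orthogonal x y}"
  have V: "subspace V" unfolding V_def by (rule subspace_orthogonal_to_vectors)
  have inv: "A *v x \<in> V" if "x \<in> V" for x
  proof -
    have "b \<bullet> (A *v x) = 0" if "b \<in> B" for b
    proof -
      have "b \<bullet> (A *v x) = (b \<bullet> (A *v b)) * (b \<bullet> x)"
        by (metis sym_inner[OF A] eB[OF \<open>b \<in> B\<close>] inner_scaleR_left)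
      also have "b \<bullet> x = 0" using \<open>x \<in> V\<close> \<open>b \<in> B\<close> by (auto simp: V_def orthogonal_def)
      finally show ?thesis by simp
    qed
    then show ?thesis by (simp add: V_def orthogonal_def)
  qed
  have "dim B < DIM(real^'n)" using dim_le_card[OF span_superset fB] cB by simp
  then obtain y where "y \<noteq> 0" "\<And>z. z \<in> span B \<Longrightarrow> orthogonal y z"
    using orthogonal_to_subspace_exists by blast
  then have "y \<in> V" "y \<noteq> 0" by (auto simp: V_def span_base orthogonal_commute)
  then obtain u where uV: "u \<in> V" and un: "norm u = 1"
    and ue: "A *v u = (u \<bullet> (A *v u)) *\<^sub>R u"
    using sym_eigenvector_in_invariant_subspace[OF A V inv] by blast
  have uB: "u \<notin> B" using uV un by (auto simp: V_def orthogonal_def norm_eq_1)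
  have "pairwise orthogonal (insert u B)"
    using uV by (intro pairwise_orthogonal_insert[OF poB]) (auto simp: V_def orthogonal_commute)
  then have "eigen_system A (insert u B)"
    using fB un ue nB eB by (auto simp: eigen_system_def)
  moreover have "card (insert u B) = Suc (card B)" using fB uB by simp
  ultimately show ?thesis by blast
qed

lemma eigen_system_card:
  fixes A :: "real^'n^'n"
  assumes A: "sym_mat A" and k: "k \<le> CARD('n)"
  shows "\<exists>B. eigen_system A B \<and> card B = k"
  using k
proof (induction k)
  case 0
  have "eigen_system A {}" by (simp add: eigen_system_def)
  then show ?case by (intro exI[of _ "{}"]) simp
next
  case (Suc k)
  then obtain B where "eigen_system A B" "card B = k" by auto
  then show ?case using eigen_system_extend[OF A, of B] Suc.prems by auto
qed

lemma orthonormal_columns_orthogonal: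
  fixes f :: "'n \<Rightarrow> real^'n"
  assumes "\<And>i j. f i \<bullet> f j = (if i = j then 1 else 0)"
  shows "orthogonal_matrix (\<chi> i j. f j $ i)"
proof -
  have "transpose (\<chi> i j. f j $ i) ** (\<chi> i j. f j $ i) = mat 1"
    using assms by (simp add: transpose_def matrix_matrix_mult_def inner_vec_def mat_def vec_eq_iff)
  then show ?thesis
    by (simp add: orthogonal_matrix_def matrix_left_right_inverse1)
qed

theorem spectral_theorem:
  fixes A :: "real^'n^'n"
  assumes A: "sym_mat A"
  shows "\<exists>U d. orthogonal_matrix U \<and> A = orth_diag U d"
proof -
  obtain B where B: "eigen_system A B" and cB: "card B = CARD('n)"
    using eigen_system_card[OF A order_refl] by blast
  then obtain f where f: "bij_betw f (UNIV::'n set) B"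
    using finite_same_card_bij[of "UNIV::'n set" B] by (auto simp: eigen_system_def)
  have fB: "f j \<in> B" for j using f by (auto simp: bij_betw_def)
  have fdot: "f i \<bullet> f j = (if i = j then 1 else 0)" for i j
  proof (cases "i = j")
    case True then show ?thesis using B fB by (simp add: eigen_system_def norm_eq_1)
  next
    case False then have "f i \<noteq> f j" using f by (auto simp: bij_betw_def inj_on_def)
    then show ?thesis using B fB False by (auto simp: eigen_system_def pairwise_def orthogonal_def)
  qed
  define U :: "real^'n^'n" where "U = (\<chi> i j. f j $ i)"
  define d where "d j = f j \<bullet> (A *v f j)" for j
  have U: "orthogonal_matrix U" unfolding U_def by (rule orthonormal_columns_orthogonal[OF fdot])
  have "A *v f j = d j *\<^sub>R f j" for j using B fB by (simp add: eigen_system_def d_def)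
  then have "A ** U = U ** diag_mat d"
    by (simp add: U_def diag_mat_def matrix_matrix_mult_def matrix_vector_mult_def vec_eq_iff
        if_distrib if_distribR sum.delta mult.commute cong: if_cong)
  moreover have "A = (A ** U) ** transpose U"
    using U by (simp add: orthogonal_matrix_def matrix_mul_assoc[symmetric])
  ultimately have "A = orth_diag U d" by (simp add: orth_diag_def)
  then show ?thesis using U by blast
qed

lemma pd_spectral:
  fixes A :: "real^'n^'n"
  assumes "pd_mat A"
  obtains U d where "orthogonal_matrix U" "A = orth_diag U d" "\<And>i. d i > 0"
  using spectral_theorem[of A] assms orth_diag_pd_eigen unfolding pd_mat_def by metis

lemma psd_spectral:
  fixes A :: "real^'n^'n"
  assumes "psd_mat A"
  obtains U d where "orthogonal_matrix U" "A = orth_diag U d" "\<And>i. d i \<ge> 0"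
  using spectral_theorem[of A] assms orth_diag_psd_eigen unfolding psd_mat_def by metis

lemma pd_det_pos: "pd_mat (A::real^'n^'n) \<Longrightarrow> det A > 0"
  by (metis pd_spectral orth_diag_det prod_pos)

(* ln det X <= tr X - p for pd X: the inequality ln t <= t - 1 on each eigenvalue. *)
lemma ln_det_le_trace:
  fixes X :: "real^'n^'n"
  assumes "pd_mat X"
  shows "ln (det X) \<le> trace X - real CARD('n)"
proof -
  obtain V \<mu> where V: "orthogonal_matrix V" and X: "X = orth_diag V \<mu>" and \<mu>: "\<And>i. \<mu> i > 0"
    using pd_spectral[OF assms] by blast
  have "ln (det X) = (\<Sum>i\<in>UNIV. ln (\<mu> i))"
    unfolding X orth_diag_det[OF V] by (rule ln_prod) (use \<mu> in \<open>auto simp: less_imp_neq[symmetric]\<close>)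
  also have "\<dots> \<le> (\<Sum>i\<in>UNIV. \<mu> i - 1)" by (rule sum_mono) (rule ln_le_minus_one[OF \<mu>])
  also have "\<dots> = trace X - real CARD('n)" by (simp add: X orth_diag_trace[OF V] sum_subtractf)
  finally show ?thesis .
qed

lemma pd_congruence:
  fixes K \<Omega> :: "real^'n^'n"
  assumes "pd_mat \<Omega>" and "invertible K"
  shows "pd_mat (transpose K ** \<Omega> ** K)"
  unfolding pd_mat_def sym_mat_def
proof (intro conjI allI impI)
  have "transpose \<Omega> = \<Omega>" using assms(1) by (simp add: pd_mat_def sym_mat_def)
  then show "transpose (transpose K ** \<Omega> ** K) = transpose K ** \<Omega> ** K"
    by (simp add: matrix_transpose_mul matrix_mul_assoc)
  fix x :: "real^'n" assume "x \<noteq> 0"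
  then have "K *v x \<noteq> 0"
    using assms(2) by (metis invertible_def matrix_vector_mul_assoc matrix_vector_mul_lid
        matrix_vector_mult_0_right)
  then have "0 < (K *v x) \<bullet> (\<Omega> *v (K *v x))" using assms(1) by (simp add: pd_mat_def)
  also have "\<dots> = x \<bullet> ((transpose K ** \<Omega> ** K) *v x)"
    by (simp add: dot_lmul_matrix[symmetric] matrix_vector_mul_assoc[symmetric]
        del: transpose_matrix_vector)
  finally show "0 < x \<bullet> ((transpose K ** \<Omega> ** K) *v x)" .
qed

(* For symmetric D and pd A, tr(D A D) is the sum of the quadratic forms of A at the rows of
   D; it is therefore positive unless D = 0. *)
lemma trace_congruence_pos:
  fixes D A :: "real^'n^'n"
  assumes D: "transpose D = D" and A: "pd_mat A" and nz: "D \<noteq> 0"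
  shows "trace (D ** A ** D) > 0"
proof -
  have Ds: "D $ l $ i = D $ i $ l" for i l
    using D by (metis transpose_def vec_lambda_beta)
  have rows: "(D ** A ** D) $ i $ i = (D$i) \<bullet> (A *v (D$i))" for i
  proof -
    have "(D ** A ** D) $ i $ i = (\<Sum>l\<in>UNIV. \<Sum>k\<in>UNIV. D$i$k * (A$k$l * D$i$l))"
      by (simp add: matrix_matrix_mult_def sum_distrib_right Ds mult.assoc)
    also have "\<dots> = (\<Sum>k\<in>UNIV. \<Sum>l\<in>UNIV. D$i$k * (A$k$l * D$i$l))"
      by (rule sum.swap)
    also have "\<dots> = (D$i) \<bullet> (A *v (D$i))"
      by (simp add: inner_vec_def matrix_vector_mult_def sum_distrib_left)
    finally show ?thesis .
  qed
  obtain i where "D $ i \<noteq> 0" using nz by (auto simp: vec_eq_iff)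
  then have "0 < (D$i) \<bullet> (A *v (D$i))" using A by (simp add: pd_mat_def)
  also have "\<dots> \<le> (\<Sum>i\<in>UNIV. (D$i) \<bullet> (A *v (D$i)))"
    by (rule member_le_sum) (simp_all add: pd_quad_nonneg[OF A])
  finally show ?thesis by (simp add: trace_def rows)
qed

(* Uniqueness of the positive definite square root: if R^2 = Q^2 then with D = R - Q,
   R D + D Q = 0, so tr(D R D) + tr(D Q D) = 0, forcing D = 0. *)
lemma pd_square_root_unique:
  fixes R Q :: "real^'n^'n"
  assumes R: "pd_mat R" and Q: "pd_mat Q" and eq: "R ** R = Q ** Q"
  shows "R = Q"
proof (rule ccontr)
  assume "R \<noteq> Q"
  define D where "D = R - Q"
  have "transpose D = D" using R Q by (simp add: D_def transpose_diff pd_mat_def sym_mat_def)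
  then have pos: "trace (D ** R ** D) > 0" "trace (D ** Q ** D) > 0"
    using R Q \<open>R \<noteq> Q\<close> by (simp_all add: D_def trace_congruence_pos)
  have "R ** D + D ** Q = 0" using eq by (simp add: D_def matrix_diff_ldistrib matrix_diff_rdistrib)
  then have "trace (D ** (R ** D + D ** Q)) = 0" by (simp add: trace_def)
  moreover have "trace (D ** (D ** Q)) = trace (D ** Q ** D)" by (metis trace_mul_sym)
  ultimately have "trace (D ** R ** D) + trace (D ** Q ** D) = 0"
    by (simp add: matrix_add_ldistrib trace_add matrix_mul_assoc)
  with pos show False by linarith
qed

lemma mat_sqrt_eq: "pd_mat R \<Longrightarrow> R ** R = H \<Longrightarrow> mat_sqrt H = R"
  unfolding mat_sqrt_def by (rule the_equality) (use pd_square_root_unique in auto)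

(* The eigenvalue map of Omega_hat: w la x = 1 / (sqrt (la + x^2/4) + x/2). *)
definition eig_hat :: "real \<Rightarrow> real \<Rightarrow> real" where
  "eig_hat la x = 1 / (sqrt (la + 1/4 * (x * x)) + 1/2 * x)"

lemma eig_hat_den_pos:
  assumes "la > 0" "x \<ge> 0"
  shows "sqrt (la + 1/4 * (x * x)) + 1/2 * x > 0"
proof -
  have "sqrt (la + 1/4 * (x * x)) > 0" using assms by (simp add: add_pos_nonneg)
  then show ?thesis using assms by linarith
qed

lemma eig_hat_pos: "la > 0 \<Longrightarrow> x \<ge> 0 \<Longrightarrow> eig_hat la x > 0"
  unfolding eig_hat_def using eig_hat_den_pos by simp

lemma eig_hat_equation:
  assumes "la > 0" "x \<ge> 0"
  shows "1 / eig_hat la x = x + la * eig_hat la x"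
proof -
  define r where "r = sqrt (la + 1/4 * (x * x))"
  have d: "r + 1/2 * x > 0" using eig_hat_den_pos[OF assms] by (simp add: r_def)
  have "r * r = la + 1/4 * (x * x)"
    unfolding r_def using assms by (simp add: real_sqrt_mult_self)
  then have "(r - 1/2 * x) * (r + 1/2 * x) = la" by (simp add: algebra_simps)
  then have "r + 1/2 * x = x + la / (r + 1/2 * x)" using d by (simp add: field_simps)
  then show ?thesis unfolding eig_hat_def r_def[symmetric] by simp
qed

lemma eig_hat_unique:
  assumes "q > 0" "la > 0" "x = 1 / q - la * q" "x \<ge> 0"
  shows "eig_hat la x = q"
proof -
  have "x * q + la * q * q = 1" using assms by (simp add: field_simps)
  then have "(x / 2 + la * q)^2 = la + 1/4 * (x * x)"
    by (simp add: power2_eq_square algebra_simps) (metis distrib_left mult.assoc mult_1_right)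
  moreover have "x / 2 + la * q \<ge> 0" using assms by simp
  ultimately have "sqrt (la + 1/4 * (x * x)) = x / 2 + la * q"
    by (metis real_sqrt_abs abs_of_nonneg)
  then show ?thesis using assms unfolding eig_hat_def by simp
qed

lemma eig_hat_le: assumes "la > 0" "x \<ge> 0" shows "eig_hat la x \<le> 1 / sqrt la"
proof -
  have "sqrt la \<le> sqrt (la + 1/4 * (x * x))" by (simp add: real_sqrt_le_iff)
  then have "sqrt la \<le> sqrt (la + 1/4 * (x * x)) + 1/2 * x" using assms by linarith
  moreover have "0 < (sqrt (la + 1/4 * (x * x)) + 1/2 * x) * sqrt la"
    using eig_hat_den_pos[OF assms] assms by simp
  ultimately show ?thesis unfolding eig_hat_def by (intro divide_left_mono) auto
qed

lemma eig_hat_tendsto_inverse: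
  assumes "x > 0"
  shows "((\<lambda>la. eig_hat la x) \<longlongrightarrow> 1 / x) (at_right 0)"
proof -
  have "0 + 1/4 * (x * x) = (x / 2)^2" by (simp add: power2_eq_square)
  then have den: "sqrt (0 + 1/4 * (x * x)) + 1/2 * x = x" using assms by simp
  have "((\<lambda>la. 1 / (sqrt (la + 1/4 * (x * x)) + 1/2 * x)) \<longlongrightarrow>
          1 / (sqrt (0 + 1/4 * (x * x)) + 1/2 * x)) (at_right 0)"
    by (intro tendsto_intros) (use den assms in auto)
  then show ?thesis unfolding eig_hat_def den .
qed

lemma eig_hat_tendsto_zero:
  assumes "x \<ge> 0"
  shows "((\<lambda>la. eig_hat la x) \<longlongrightarrow> 0) at_top"
proof (rule real_tendsto_sandwich[where f = "\<lambda>_. 0" and h = "\<lambda>la. 1 / sqrt la"])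
  show "\<forall>\<^sub>F la in at_top. 0 \<le> eig_hat la x"
    using eventually_gt_at_top[of "0::real"]
    by eventually_elim (use eig_hat_pos assms in \<open>auto intro: less_imp_le\<close>)
  show "\<forall>\<^sub>F la in at_top. eig_hat la x \<le> 1 / sqrt la"
    using eventually_gt_at_top[of "0::real"] by eventually_elim (use eig_hat_le assms in auto)
  show "((\<lambda>la::real. 1 / sqrt la) \<longlongrightarrow> 0) at_top" by real_asymp
qed simp

(* Omega_hat in the eigenbasis of S: every ingredient of its definition is diagonal there. *)
lemma Omega_hat_orth_diag:
  assumes V: "orthogonal_matrix V" and S: "S = orth_diag V \<sigma>" and \<sigma>: "\<And>i. \<sigma> i \<ge> 0"
    and la: "la > 0"
  shows "Omega_hat S la = orth_diag V (\<lambda>i. eig_hat la (\<sigma> i))"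
proof -
  define r where "r i = sqrt (la + 1/4 * (\<sigma> i * \<sigma> i))" for i
  have H: "la *\<^sub>R mat 1 + (1/4) *\<^sub>R (S ** S) = orth_diag V (\<lambda>i. r i * r i)"
    using la by (simp add: S r_def orth_diag_const[OF V, symmetric] orth_diag_mult[OF V]
        orth_diag_scaleR[OF V] orth_diag_add[OF V] real_sqrt_mult_self add_nonneg_nonneg)
  have "r i > 0" for i using la by (simp add: r_def add_pos_nonneg)
  then have "mat_sqrt (la *\<^sub>R mat 1 + (1/4) *\<^sub>R (S ** S)) = orth_diag V r"
    by (intro mat_sqrt_eq orth_diag_pd[OF V]) (simp_all add: orth_diag_mult[OF V] H)
  then have "mat_sqrt (la *\<^sub>R mat 1 + (1/4) *\<^sub>R (S ** S)) + (1/2) *\<^sub>R S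
             = orth_diag V (\<lambda>i. r i + 1/2 * \<sigma> i)"
    by (simp add: S orth_diag_scaleR[OF V] orth_diag_add[OF V])
  moreover have "r i + 1/2 * \<sigma> i \<noteq> 0" for i
    using eig_hat_den_pos[OF la \<sigma>] by (metis less_irrefl r_def)
  ultimately show ?thesis
    unfolding Omega_hat_def by (simp add: orth_diag_inv[OF V] eig_hat_def r_def)
qed

lemma Omega_hat_pd_stationary:
  assumes S: "psd_mat S" and la: "la > 0"
  shows "pd_mat (Omega_hat S la)" and "matrix_inv (Omega_hat S la) = S + la *\<^sub>R Omega_hat S la"
proof -
  obtain U s where U: "orthogonal_matrix U" and S: "S = orth_diag U s" and s: "\<And>i. s i \<ge> 0"
    using psd_spectral[OF S] by blast
  note Oh = Omega_hat_orth_diag[OF U S s la]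
  have w: "eig_hat la (s i) > 0" for i by (rule eig_hat_pos[OF la s])
  then show "pd_mat (Omega_hat S la)" unfolding Oh by (rule orth_diag_pd[OF U])
  have "matrix_inv (Omega_hat S la) = orth_diag U (\<lambda>i. 1 / eig_hat la (s i))"
    unfolding Oh using w by (intro orth_diag_inv[OF U]) (metis less_irrefl)
  also have "\<dots> = orth_diag U (\<lambda>i. s i + la * eig_hat la (s i))"
    by (simp add: eig_hat_equation[OF la s])
  also have "\<dots> = S + la *\<^sub>R Omega_hat S la"
    unfolding Oh by (simp add: S orth_diag_scaleR[OF U] orth_diag_add[OF U])
  finally show "matrix_inv (Omega_hat S la) = S + la *\<^sub>R Omega_hat S la" .
qed

(* Uniqueness: if Omega = V diag(q) V^T is a pd solution, then S = Omega^-1 - la Omega is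
   diagonal in the same basis with eigenvalues 1/q i - la q i >= 0, and eig_hat inverts this
   relation, so Omega_hat S la = V diag(q) V^T = Omega. *)
lemma stationary_unique:
  fixes S \<Omega> :: "real^'n^'n"
  assumes la: "la > 0" and S: "psd_mat S" and Opd: "pd_mat \<Omega>"
    and eq: "matrix_inv \<Omega> - S - la *\<^sub>R \<Omega> = 0"
  shows "\<Omega> = Omega_hat S la"
proof -
  obtain V q where V: "orthogonal_matrix V" and O: "\<Omega> = orth_diag V q" and q: "\<And>i. q i > 0"
    using pd_spectral[OF Opd] by blast
  have "matrix_inv \<Omega> = orth_diag V (\<lambda>i. 1 / q i)"
    unfolding O using q by (intro orth_diag_inv[OF V]) (metis less_irrefl)
  moreover have "S = matrix_inv \<Omega> - la *\<^sub>R \<Omega>" using eq by (simp add: algebra_simps)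
  ultimately have S': "S = orth_diag V (\<lambda>i. 1 / q i - la * q i)"
    by (simp add: O orth_diag_scaleR[OF V] orth_diag_diff[OF V])
  have sg: "1 / q i - la * q i \<ge> 0" for i
    using orth_diag_psd_eigen[OF V] S S' by blast
  have "Omega_hat S la = orth_diag V (\<lambda>i. eig_hat la (1 / q i - la * q i))"
    by (rule Omega_hat_orth_diag[OF V S' sg la])
  also have "(\<lambda>i. eig_hat la (1 / q i - la * q i)) = q"
    by (intro ext eig_hat_unique q la refl sg)
  finally show ?thesis using O by simp
qed

lemma Omega_hat_limits:
  assumes S: "psd_mat S"
  shows "pd_mat S \<Longrightarrow> ((\<lambda>la. Omega_hat S la) \<longlongrightarrow> matrix_inv S) (at_right 0)"
    and "((\<lambda>la. Omega_hat S la) \<longlongrightarrow> 0) at_top"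
proof -
  obtain U s where U: "orthogonal_matrix U" and S: "S = orth_diag U s" and s: "\<And>i. s i \<ge> 0"
    using psd_spectral[OF S] by blast
  define W where "W la = orth_diag U (\<lambda>i. eig_hat la (s i))" for la
  have Oh: "\<forall>\<^sub>F la in F. W la = Omega_hat S la" if "\<forall>\<^sub>F la in F. la > 0" for F
    using that by eventually_elim (simp add: W_def Omega_hat_orth_diag[OF U S s])
  show "((\<lambda>la. Omega_hat S la) \<longlongrightarrow> matrix_inv S) (at_right 0)" if "pd_mat S"
  proof -
    have sp: "s i > 0" for i using orth_diag_pd_eigen[OF U] that S by blast
    then have "matrix_inv S = orth_diag U (\<lambda>i. 1 / s i)"
      unfolding S by (intro orth_diag_inv[OF U]) (metis less_irrefl)
    moreover have "(W \<longlongrightarrow> orth_diag U (\<lambda>i. 1 / s i)) (at_right 0)"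
      unfolding W_def by (intro orth_diag_tendsto[OF U] eig_hat_tendsto_inverse sp)
    moreover note tendsto_cong[OF Oh[OF eventually_at_right_less]]
    ultimately show ?thesis by simp
  qed
  have "(W \<longlongrightarrow> orth_diag U (\<lambda>i. 0)) at_top"
    unfolding W_def by (intro orth_diag_tendsto[OF U] eig_hat_tendsto_zero s)
  moreover note tendsto_cong[OF Oh[OF eventually_gt_at_top[of 0]]]
  ultimately show "((\<lambda>la. Omega_hat S la) \<longlongrightarrow> 0) at_top"
    by (simp add: orth_diag_const[OF U])
qed

lemma trace_square_diff_nonneg:
  fixes A B :: "real^'n^'n"
  assumes "transpose A = A" "transpose B = B"
  shows "trace (A ** A) - 2 * trace (B ** A) + trace (B ** B) \<ge> 0"
proof -
  have "transpose (A - B) = A - B" using assms by (simp add: transpose_diff)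
  then have "trace ((A - B) ** (A - B)) \<ge> 0" by (metis trace_gram_nonneg)
  moreover have "trace ((A - B) ** (A - B))
                 = trace (A ** A) - trace (A ** B) - trace (B ** A) + trace (B ** B)"
    by (simp add: matrix_diff_ldistrib matrix_diff_rdistrib trace_sub)
  moreover have "trace (A ** B) = trace (B ** A)" by (rule trace_mul_sym)
  ultimately show ?thesis by simp
qed

lemma pd_inverse_sqrt:
  fixes Oh :: "real^'n^'n"
  assumes "pd_mat Oh"
  obtains K where "transpose K = K" "invertible K"
    "K ** K = matrix_inv Oh" "(K ** K) ** Oh = mat 1"
proof -
  obtain U w where U: "orthogonal_matrix U" and Oh: "Oh = orth_diag U w" and w: "\<And>i. w i > 0"
    using pd_spectral[OF assms] by blast
  define K where "K = orth_diag U (\<lambda>i. 1 / sqrt (w i))"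
  have Oh_inv: "matrix_inv Oh = orth_diag U (\<lambda>i. 1 / w i)"
    unfolding Oh using w by (intro orth_diag_inv[OF U]) (metis less_irrefl)
  moreover have "(\<lambda>i. 1 / sqrt (w i) * (1 / sqrt (w i))) = (\<lambda>i. 1 / w i)"
    using w by (simp add: abs_of_pos)
  ultimately have KK_inv: "K ** K = matrix_inv Oh" by (simp add: K_def orth_diag_mult[OF U])
  have one: "(\<lambda>i. 1 / w i * w i) = (\<lambda>i. 1)" using w by (simp add: less_imp_neq[symmetric])
  have "(K ** K) ** Oh = orth_diag U (\<lambda>i. 1 / w i) ** orth_diag U w"
    unfolding KK_inv Oh_inv by (simp add: Oh)
  then have KKOh: "(K ** K) ** Oh = mat 1"
    by (simp only: orth_diag_mult[OF U] one orth_diag_const[OF U] scaleR_one)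
  then have "invertible K"
    by (metis invertible_def matrix_left_right_inverse matrix_mul_assoc)
  moreover have "transpose K = K" by (simp add: K_def orth_diag_sym[OF U])
  ultimately show ?thesis using that KK_inv KKOh by blast
qed

(* With K = Oh^(-1/2) and X = K Omega K one has det X = det Omega / det Oh,
   tr X = tr(S Omega) + la tr(Oh Omega) and tr(S Oh) + la tr(Oh^2) = p, whence
   objective Omega - objective Oh = (ln det X - tr X + p) - la/2 tr((Omega - Oh)^2) <= 0. *)
lemma stationary_maximises_objective:
  fixes S Oh \<Omega> :: "real^'n^'n"
  assumes la: "la \<ge> 0" and Ohpd: "pd_mat Oh" and inv: "matrix_inv Oh = S + la *\<^sub>R Oh"
    and Opd: "pd_mat \<Omega>"
  shows "objective S la \<Omega> \<le> objective S la Oh"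
proof -
  obtain K where Ks: "transpose K = K" and "invertible K"
    and KK_inv: "K ** K = matrix_inv Oh" and KKOh: "(K ** K) ** Oh = mat 1"
    using pd_inverse_sqrt[OF Ohpd] by blast
  then have Xpd: "pd_mat (K ** \<Omega> ** K)" using pd_congruence[OF Opd] by metis
  have KK: "K ** K = S + la *\<^sub>R Oh" using KK_inv inv by simp
  have "det (K ** \<Omega> ** K) * det Oh = det \<Omega>"
    using arg_cong[OF KKOh, of det] by (simp add: det_mul algebra_simps)
  then have "det (K ** \<Omega> ** K) = det \<Omega> / det Oh"
    using pd_det_pos[OF Ohpd] by (simp add: field_simps)
  then have lnX: "ln (det \<Omega>) - ln (det Oh) = ln (det (K ** \<Omega> ** K))"
    using pd_det_pos[OF Ohpd] pd_det_pos[OF Opd] by (simp add: ln_div)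
  have "trace (K ** \<Omega> ** K) = trace ((K ** K) ** \<Omega>)"
    by (metis trace_mul_sym matrix_mul_assoc)
  then have trX: "trace (K ** \<Omega> ** K) = trace (S ** \<Omega>) + la * trace (Oh ** \<Omega>)"
    by (simp add: KK matrix_add_rdistrib matrix_scaleR_left trace_add trace_scaleR)
  have fixed: "trace (S ** Oh) + la * trace (Oh ** Oh) = real CARD('n)"
    using arg_cong[OF KKOh, of trace]
    by (simp add: KK trace_I matrix_add_rdistrib matrix_scaleR_left trace_add trace_scaleR)
  have sym: "transpose \<Omega> = \<Omega>" "transpose Oh = Oh"
    using Opd Ohpd by (simp_all add: pd_mat_def sym_mat_def)
  have "la * (trace (\<Omega> ** \<Omega>) - 2 * trace (Oh ** \<Omega>) + trace (Oh ** Oh)) \<ge> 0"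
    using la trace_square_diff_nonneg[OF sym] by simp
  then show ?thesis
    using ln_det_le_trace[OF Xpd] lnX trX fixed unfolding objective_def sym
    by (simp add: algebra_simps)
qed

theorem corollary1:
  fixes S :: "real^'p^'p"
  assumes "psd_mat S"
  shows "(\<forall>la>0.
            pd_mat (Omega_hat S la)
          \<and> (\<forall>\<Omega>. pd_mat \<Omega> \<longrightarrow> objective S la \<Omega> \<le> objective S la (Omega_hat S la))
          \<and> matrix_inv (Omega_hat S la) - S - la *\<^sub>R Omega_hat S la = 0
          \<and> (\<forall>\<Omega>. pd_mat \<Omega> \<and> matrix_inv \<Omega> - S - la *\<^sub>R \<Omega> = 0 \<longrightarrow> \<Omega> = Omega_hat S la))
       \<and> (pd_mat S \<longrightarrow> ((\<lambda>la. Omega_hat S la) \<longlongrightarrow> matrix_inv S) (at_right 0))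
       \<and> ((\<lambda>la. Omega_hat S la) \<longlongrightarrow> 0) at_top"
proof -
  have "pd_mat (Omega_hat S la)
        \<and> (\<forall>\<Omega>. pd_mat \<Omega> \<longrightarrow> objective S la \<Omega> \<le> objective S la (Omega_hat S la))
        \<and> matrix_inv (Omega_hat S la) - S - la *\<^sub>R Omega_hat S la = 0
        \<and> (\<forall>\<Omega>. pd_mat \<Omega> \<and> matrix_inv \<Omega> - S - la *\<^sub>R \<Omega> = 0 \<longrightarrow> \<Omega> = Omega_hat S la)"
    if la: "la > 0" for la
  proof (intro conjI allI impI)
    note pd = Omega_hat_pd_stationary(1)[OF assms la]
    and stationary = Omega_hat_pd_stationary(2)[OF assms la]
    show "pd_mat (Omega_hat S la)" by (rule pd)
    show "objective S la \<Omega> \<le> objective S la (Omega_hat S la)" if "pd_mat \<Omega>" for \<Omega>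
      by (rule stationary_maximises_objective[OF less_imp_le[OF la] pd stationary that])
    show "matrix_inv (Omega_hat S la) - S - la *\<^sub>R Omega_hat S la = 0"
      by (simp add: stationary)
    show "\<Omega> = Omega_hat S la" if "pd_mat \<Omega> \<and> matrix_inv \<Omega> - S - la *\<^sub>R \<Omega> = 0" for \<Omega>
      using stationary_unique[OF la assms] that by blast
  qed
  then show ?thesis using Omega_hat_limits[OF assms] by blast
qed

end
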